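(* Let $p$ be a prime and let $f$ be one of the following automorphisms of $\mathbb{Z}_p^2$ (acting on column vectors): $D(b,c)=\begin{bmatrix} b&0\\0&c\end{bmatrix}$ with $1<b\le c<p$; $G(b)=\begin{bmatrix} b&1\\0&b\end{bmatrix}$ with $1<b<p$; $H(q)=\begin{bmatrix}0&1\\-b_0&-b_1\end{bmatrix}$ where $q=x^2+b_1x+b_0$ is irreducible over $\mathbb{Z}_p$. Then the (connected) quandle $\mathrm{Aff}(\mathbb{Z}_p^2,f)$ is simply connected if and only if $f$ is one of: (i) $D(b,c)$ with $bc\not\equiv 1\pmod p$; (ii) $G(b)$ with $b\not\equiv -1\pmod p$; (iii) $H(q)$ with $q=x^2+b_1x+b_0$ and $b_0\neq 1$.
   Context: A quandle is a set $Q$ with a binary operation $*$ such that every left translation $L_x:y\mapsto x*y$ is bijective, $x*(y*z)=(x*y)*(x*z)$ and $x*x=x$. For an abelian group $A$ and $f\in\mathrm{Aut}(A)$, the affine quandle $\mathrm{Aff}(A,f)$ is $A$ with $x*y=x+f(y-x)$. $Q$ is connected if $\langle L_x:x\in Q\rangle$ is transitive on $Q$. Every connected affine quandle over $\mathbb{Z}_p^2$ is isomorphic to $\mathrm{Aff}(\mathbb{Z}_p^2,f)$ for $f$ in the list above. For a set $S$, a quandle cocycle with values in $\mathrm{Sym}_S$ is $\theta:Q\times Q\to\mathrm{Sym}_S$ with $\theta_{x*y,x*z}\theta_{x,z}=\theta_{x,y*z}\theta_{y,z}$ and $\theta_{x,x}=1$; it is cohomologous to the trivial cocycle if there is $\gamma:Q\to\mathrm{Sym}_S$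 with $\theta_{x,y}=\gamma_{x*y}\gamma_y^{-1}$ for all $x,y$. $Q$ is simply connected if it is connected and, for every set $S$, every quandle cocycle with values in $\mathrm{Sym}_S$ is cohomologous to the trivial cocycle. *)

theory Defs
  imports Main "HOL-Combinatorics.Permutations" "HOL-Computational_Algebra.Primes"
begin

definition is_quandle :: "'q set \<Rightarrow> ('q \<Rightarrow> 'q \<Rightarrow> 'q) \<Rightarrow> bool" where
  "is_quandle Q op \<longleftrightarrow>
     (\<forall>x\<in>Q. \<forall>y\<in>Q. op x y \<in> Q) \<and>
     (\<forall>x\<in>Q. bij_betw (op x) Q Q) \<and>
     (\<forall>x\<in>Q. \<forall>y\<in>Q. \<forall>z\<in>Q. op x (op y z) = op (op x y) (op x z)) \<and>
     (\<forall>x\<in>Q. op x x = x)"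

text \<open>Connected: the group generated by the left translations L_x acts transitively.
  The orbit of y under this group is the equivalence class of y w.r.t. the
  reflexive-transitive-symmetric closure of y ~ x*y.\<close>
definition quandle_connected :: "'q set \<Rightarrow> ('q \<Rightarrow> 'q \<Rightarrow> 'q) \<Rightarrow> bool" where
  "quandle_connected Q op \<longleftrightarrow>
     (let R = {(y, op x y) | x y. x \<in> Q \<and> y \<in> Q} in
       \<forall>y\<in>Q. \<forall>z\<in>Q. (y, z) \<in> (R \<union> R\<inverse>)\<^sup>*)"

text \<open>Sym_S is represented by the permutations of S (functions fixing everything outside S),
  the group product being composition.\<close>
definition quandle_cocycle ::
  "'q set \<Rightarrow> ('q \<Rightarrow> 'q \<Rightarrow> 'q) \<Rightarrow> 's set \<Rightarrow> ('q \<Rightarrow> 'q \<Rightarrow> 's \<Rightarrow> 's) \<Rightarrow> bool" where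
  "quandle_cocycle Q op S \<theta> \<longleftrightarrow>
     (\<forall>x\<in>Q. \<forall>y\<in>Q. \<theta> x y permutes S) \<and>
     (\<forall>x\<in>Q. \<forall>y\<in>Q. \<forall>z\<in>Q.
        \<theta> (op x y) (op x z) \<circ> \<theta> x z = \<theta> x (op y z) \<circ> \<theta> y z) \<and>
     (\<forall>x\<in>Q. \<theta> x x = id)"

definition cohomologous_trivial ::
  "'q set \<Rightarrow> ('q \<Rightarrow> 'q \<Rightarrow> 'q) \<Rightarrow> 's set \<Rightarrow> ('q \<Rightarrow> 'q \<Rightarrow> 's \<Rightarrow> 's) \<Rightarrow> bool" where
  "cohomologous_trivial Q op S \<theta> \<longleftrightarrow>
     (\<exists>\<gamma>. (\<forall>x\<in>Q. \<gamma> x permutes S) \<and>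
          (\<forall>x\<in>Q. \<forall>y\<in>Q. \<theta> x y = \<gamma> (op x y) \<circ> inv (\<gamma> y)))"

text \<open>Simply connected, with the sets S ranging over subsets of a type 's
  (the theorem is stated for an arbitrary infinite type 's).\<close>
definition simply_connected ::
  "'q set \<Rightarrow> ('q \<Rightarrow> 'q \<Rightarrow> 'q) \<Rightarrow> 's itself \<Rightarrow> bool" where
  "simply_connected Q op (_ :: 's itself) \<longleftrightarrow>
     quandle_connected Q op \<and>
     (\<forall>(S :: 's set) \<theta>. quandle_cocycle Q op S \<theta> \<longrightarrow> cohomologous_trivial Q op S \<theta>)"

text \<open>Z_p^2 = pairs of residues in {0..<p}; a 2x2 matrix [[a,b],[c,d]] is the tuple (a,b,c,d),
  acting on column vectors.\<close>
type_synonym mat2 = "int \<times> int \<times> int \<times> int"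

definition Zp2 :: "int \<Rightarrow> (int \<times> int) set" where
  "Zp2 p = {0..<p} \<times> {0..<p}"

definition mat_apply :: "int \<Rightarrow> mat2 \<Rightarrow> int \<times> int \<Rightarrow> int \<times> int" where
  "mat_apply p M v = (case M of (a, b, c, d) \<Rightarrow>
     ((a * fst v + b * snd v) mod p, (c * fst v + d * snd v) mod p))"

definition aff_op :: "int \<Rightarrow> mat2 \<Rightarrow> int \<times> int \<Rightarrow> int \<times> int \<Rightarrow> int \<times> int" where
  "aff_op p M x y =
     (let w = mat_apply p M (fst y - fst x, snd y - snd x)
      in ((fst x + fst w) mod p, (snd x + snd w) mod p))"

definition Dmat :: "int \<Rightarrow> int \<Rightarrow> mat2" where "Dmat b c = (b, 0, 0, c)"
definition Gmat :: "int \<Rightarrow> mat2" where "Gmat b = (b, 1, 0, b)"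
definition Hmat :: "int \<Rightarrow> int \<Rightarrow> mat2" where "Hmat b1 b0 = (0, 1, - b0, - b1)"

definition irreducible_quadratic_mod :: "int \<Rightarrow> int \<Rightarrow> int \<Rightarrow> bool" where
  "irreducible_quadratic_mod p b1 b0 \<longleftrightarrow>
     \<not> (\<exists>a1 a0 c1 c0. a1 mod p \<noteq> 0 \<and> c1 mod p \<noteq> 0 \<and>
          (a1 * c1) mod p = 1 mod p \<and>
          (a1 * c0 + a0 * c1) mod p = b1 mod p \<and>
          (a0 * c0) mod p = b0 mod p)"

end

theory Submission
  imports Defs "HOL-Number_Theory.Cong"
begin

text \<open>It suffices to show that \<open>Aff(Z\<^sub>p\<^sup>2, M)\<close>, for \<open>M\<close> and \<open>1 - M\<close> invertible, is simply
  connected iff \<open>det M \<noteq> 1\<close>; the three families have determinants \<open>bc\<close>, \<open>b\<^sup>2\<close> and \<open>b\<^sub>0\<close>.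

  Normalise a cocycle \<open>\<theta>\<close> so that \<open>\<theta>\<^bsub>x,0\<^esub> = 1\<close> and let \<open>e\<^sub>x\<close> be the left translations of the
  extension \<open>Q \<times>\<^sub>\<theta> S\<close>. In the group they generate, \<open>a\<^sub>x = e\<^sub>x e\<^sub>0\<^sup>-\<^sup>1\<close> conjugates \<open>e\<^sub>z\<close> to
  \<open>e\<^bsub>z + (1 - M) x\<^esub>\<close>. Hence the defects \<open>a\<^sub>x a\<^sub>y a\<^bsub>x+y\<^esub>\<^sup>-\<^sup>1\<close> are central, and the commutator
  \<open>[a\<^sub>x, a\<^sub>y]\<close> is an alternating bilinear form on \<open>Z\<^sub>p\<^sup>2\<close>, that is \<open>det(x, y) \<kappa>\<close> with \<open>p \<kappa> = 0\<close>.
  Conjugation by \<open>e\<^sub>0\<close> multiplies it by \<open>det M\<close>, so \<open>\<kappa> = 0\<close> unless \<open>det M = 1\<close>; then \<open>a\<close> is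
  additive, which forces \<open>\<theta> = 1\<close>. When \<open>det M = 1\<close>, \<open>\<theta>\<^bsub>x,y\<^esub> = \<tau>\<^bsup>det(x,y)\<^esup>\<close> for a
  \<open>p\<close>-cycle \<open>\<tau>\<close> is a cocycle but not a coboundary.\<close>

section \<open>Arithmetic of Z_p^2\<close>

definition mat_det :: "mat2 \<Rightarrow> int" where
  "mat_det M = (case M of (a, b, c, d) \<Rightarrow> a * d - b * c)"

definition one_minus_mat :: "mat2 \<Rightarrow> mat2" where
  "one_minus_mat M = (case M of (a, b, c, d) \<Rightarrow> (1 - a, - b, - c, 1 - d))"

definition zp2_add :: "int \<Rightarrow> int \<times> int \<Rightarrow> int \<times> int \<Rightarrow> int \<times> int" where
  "zp2_add p u v = ((fst u + fst v) mod p, (snd u + snd v) mod p)"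

definition zp2_neg :: "int \<Rightarrow> int \<times> int \<Rightarrow> int \<times> int" where
  "zp2_neg p u = ((- fst u) mod p, (- snd u) mod p)"

definition zp2_smul :: "int \<Rightarrow> nat \<Rightarrow> int \<times> int \<Rightarrow> int \<times> int" where
  "zp2_smul p n u = ((int n * fst u) mod p, (int n * snd u) mod p)"

lemma cong_mod_leftI: "[t = t'] (mod p) \<Longrightarrow> [t mod p = t'] (mod (p::int))"
  by (simp add: cong_def)

text \<open>Applying \<open>mod_eq_by_cong\<close> and then \<open>cong_strip\<close> repeatedly replaces every nested
  \<open>t mod p\<close> by \<open>t\<close>, leaving a ring identity between mod-free terms.\<close>
lemmas cong_strip =
  cong_mod_leftI cong_add cong_diff cong_mult cong_minus_minus_iff[THEN iffD2] cong_refl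

lemma mod_eq_by_cong:
  "[X = X0] (mod p) \<Longrightarrow> [Y = Y0] (mod p) \<Longrightarrow> X0 = Y0 \<Longrightarrow> X mod p = Y mod (p::int)"
  by (metis cong_def cong_sym cong_trans)

lemma mod_eq_by_cong_dvd:
  "[X = X0] (mod p) \<Longrightarrow> [Y = Y0] (mod p) \<Longrightarrow> X0 - Y0 = D * K \<Longrightarrow> p dvd D
    \<Longrightarrow> X mod p = Y mod (p::int)"
  by (metis cong_def cong_iff_dvd_diff cong_sym cong_trans dvd_mult2)

lemma mem_Zp2: "x \<in> Zp2 p \<longleftrightarrow> 0 \<le> fst x \<and> fst x < p \<and> 0 \<le> snd x \<and> snd x < p"
  by (cases x) (auto simp: Zp2_def)

lemma finite_Zp2: "finite (Zp2 p)"
  by (simp add: Zp2_def)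

lemma mod_pair_in_Zp2: "p > 0 \<Longrightarrow> (a mod p, b mod p) \<in> Zp2 p"
  by (simp add: mem_Zp2)

lemma zp2_add_in: "p > 0 \<Longrightarrow> zp2_add p u v \<in> Zp2 p"
  by (simp add: zp2_add_def mod_pair_in_Zp2)

lemma zp2_neg_in: "p > 0 \<Longrightarrow> zp2_neg p u \<in> Zp2 p"
  by (simp add: zp2_neg_def mod_pair_in_Zp2)

lemma zp2_smul_in: "p > 0 \<Longrightarrow> zp2_smul p n u \<in> Zp2 p"
  by (simp add: zp2_smul_def mod_pair_in_Zp2)

lemma mat_apply_in: "p > 0 \<Longrightarrow> mat_apply p M v \<in> Zp2 p"
  by (cases M) (simp add: mat_apply_def mod_pair_in_Zp2)

lemma aff_op_in: "p > 0 \<Longrightarrow> aff_op p M x y \<in> Zp2 p"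
  by (simp add: aff_op_def Let_def mod_pair_in_Zp2)

lemma zp2_add_commute: "zp2_add p u v = zp2_add p v u"
  by (simp add: zp2_add_def add.commute)

lemma zp2_add_assoc: "zp2_add p (zp2_add p u v) w = zp2_add p u (zp2_add p v w)"
  by (simp add: zp2_add_def mod_simps add.assoc)

lemma zp2_add_zero: "u \<in> Zp2 p \<Longrightarrow> zp2_add p u (0, 0) = u"
  by (cases u) (simp add: zp2_add_def mem_Zp2)

lemma zp2_zero_add: "u \<in> Zp2 p \<Longrightarrow> zp2_add p (0, 0) u = u"
  by (cases u) (simp add: zp2_add_def mem_Zp2)

lemma zp2_add_neg: "zp2_add p u (zp2_neg p u) = (0, 0)"
  by (simp add: zp2_add_def zp2_neg_def mod_simps)

lemma zp2_neg_add: "zp2_add p (zp2_neg p u) u = (0, 0)"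
  by (simp add: zp2_add_commute zp2_add_neg)

lemma zp2_add_neg_cancel: "u \<in> Zp2 p \<Longrightarrow> zp2_add p (zp2_add p u (zp2_neg p v)) v = u"
  by (simp add: zp2_add_assoc zp2_neg_add zp2_add_zero)

lemma zp2_add_left_cancel:
  assumes "v \<in> Zp2 p" "w \<in> Zp2 p" "zp2_add p u v = zp2_add p u w"
  shows "v = w"
proof -
  have "zp2_add p (zp2_neg p u) (zp2_add p u v) = zp2_add p (zp2_neg p u) (zp2_add p u w)"
    using assms(3) by simp
  then show ?thesis
    using assms(1,2) by (simp add: zp2_add_assoc[symmetric] zp2_neg_add zp2_zero_add)
qed

lemma zp2_smul_0: "zp2_smul p 0 u = (0, 0)"
  by (simp add: zp2_smul_def)

lemma zp2_smul_Suc: "zp2_smul p (Suc n) u = zp2_add p u (zp2_smul p n u)"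
  by (simp add: zp2_smul_def zp2_add_def mod_simps algebra_simps)

lemma zp2_smul_modulus: "p \<ge> 0 \<Longrightarrow> zp2_smul p (nat p) u = (0, 0)"
  by (simp add: zp2_smul_def)

lemma zp2_decompose:
  "u \<in> Zp2 p \<Longrightarrow> u = zp2_add p (zp2_smul p (nat (fst u)) (1, 0)) (zp2_smul p (nat (snd u)) (0, 1))"
  by (cases u) (simp add: zp2_smul_def zp2_add_def mem_Zp2)

lemma mat_apply_zero: "mat_apply p M (0, 0) = (0, 0)"
  by (cases M) (simp add: mat_apply_def)

lemma mat_apply_add: "mat_apply p M (zp2_add p u v) = zp2_add p (mat_apply p M u) (mat_apply p M v)"
  apply (cases M)
  apply (simp add: zp2_add_def mat_apply_def)
  apply (rule conjI; rule mod_eq_by_cong, (rule cong_strip)+, simp add: algebra_simps)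
  done

lemma mat_apply_one_minus_commute:
  "mat_apply p M (mat_apply p (one_minus_mat M) x) = mat_apply p (one_minus_mat M) (mat_apply p M x)"
  apply (cases M)
  apply (simp add: mat_apply_def one_minus_mat_def)
  apply (rule conjI; rule mod_eq_by_cong, (rule cong_strip)+, simp add: algebra_simps)
  done

lemma aff_op_eq_add:
  "aff_op p M x y = zp2_add p (mat_apply p (one_minus_mat M) x) (mat_apply p M y)"
  apply (cases M)
  apply (simp add: aff_op_def zp2_add_def mat_apply_def one_minus_mat_def Let_def)
  apply (rule conjI; rule mod_eq_by_cong, (rule cong_strip)+, simp add: algebra_simps)
  done

lemma aff_op_self_distrib:
  "aff_op p M x (aff_op p M y z) = aff_op p M (aff_op p M x y) (aff_op p M x z)"
  apply (cases M)
  apply (simp add: aff_op_def mat_apply_def Let_def)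
  apply (rule conjI; rule mod_eq_by_cong, (rule cong_strip)+, simp add: algebra_simps)
  done

lemma aff_op_idem: "x \<in> Zp2 p \<Longrightarrow> aff_op p M x x = x"
  by (cases M, cases x) (simp add: aff_op_def mat_apply_def mem_Zp2)

lemma inj_on_mat_apply:
  assumes "prime p" and det: "\<not> p dvd mat_det M"
  shows "inj_on (mat_apply p M) (Zp2 p)"
proof (rule inj_onI)
  fix u v assume u: "u \<in> Zp2 p" and v: "v \<in> Zp2 p" and eq: "mat_apply p M u = mat_apply p M v"
  obtain a b c d where M: "M = (a, b, c, d)" by (cases M) auto
  define s t where "s = fst u - fst v" and "t = snd u - snd v"
  have row1: "p dvd a * s + b * t" and row2: "p dvd c * s + d * t"
    using eq by (auto simp: M mat_apply_def s_def t_def mod_eq_dvd_iff algebra_simps)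
  have "p dvd d * (a * s + b * t) - b * (c * s + d * t)"
    using row1 row2 by simp
  then have "p dvd mat_det M * s"
    by (simp add: M mat_det_def algebra_simps)
  then have "p dvd s" using det \<open>prime p\<close> prime_dvd_mult_iff by blast
  moreover have "p dvd a * (c * s + d * t) - c * (a * s + b * t)"
    using row1 row2 by simp
  then have "p dvd mat_det M * t"
    by (simp add: M mat_det_def algebra_simps)
  then have "p dvd t" using det \<open>prime p\<close> prime_dvd_mult_iff by blast
  ultimately show "u = v"
    using u v unfolding s_def t_def mem_Zp2
    by (metis mod_eq_dvd_iff mod_pos_pos_trivial prod_eq_iff)
qed

lemma bij_betw_mat_apply:
  assumes "prime p" and "\<not> p dvd mat_det M"
  shows "bij_betw (mat_apply p M) (Zp2 p) (Zp2 p)"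
proof -
  have "p > 0" using \<open>prime p\<close> prime_gt_0_int by blast
  then have "mat_apply p M ` Zp2 p \<subseteq> Zp2 p" by (auto intro: mat_apply_in)
  with inj_on_mat_apply[OF assms] show ?thesis
    by (simp add: bij_betw_def endo_inj_surj finite_Zp2)
qed

lemma bij_betw_aff_op:
  assumes "prime p" and "\<not> p dvd mat_det M" and "x \<in> Zp2 p"
  shows "bij_betw (aff_op p M x) (Zp2 p) (Zp2 p)"
proof -
  have "p > 0" using \<open>prime p\<close> prime_gt_0_int by blast
  have "inj_on (aff_op p M x) (Zp2 p)"
  proof (rule inj_onI)
    fix y z assume "y \<in> Zp2 p" "z \<in> Zp2 p" "aff_op p M x y = aff_op p M x z"
    then have "mat_apply p M y = mat_apply p M z"
      by (auto simp: aff_op_eq_add intro: zp2_add_left_cancel mat_apply_in \<open>p > 0\<close>)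
    with inj_on_mat_apply[OF assms(1,2)] show "y = z"
      by (meson \<open>y \<in> Zp2 p\<close> \<open>z \<in> Zp2 p\<close> inj_onD)
  qed
  moreover have "aff_op p M x ` Zp2 p \<subseteq> Zp2 p" using \<open>p > 0\<close> by (auto intro: aff_op_in)
  ultimately show ?thesis
    by (simp add: bij_betw_def endo_inj_surj finite_Zp2)
qed

lemma is_quandle_aff_op:
  assumes "prime p" and "\<not> p dvd mat_det M"
  shows "is_quandle (Zp2 p) (aff_op p M)"
proof -
  have "p > 0" using \<open>prime p\<close> prime_gt_0_int by blast
  then show ?thesis
    unfolding is_quandle_def
    using bij_betw_aff_op[OF assms] aff_op_in aff_op_self_distrib aff_op_idem by blast
qed

lemma quandle_connected_aff_op:
  assumes "prime p" and "\<not> p dvd mat_det (one_minus_mat M)"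
  shows "quandle_connected (Zp2 p) (aff_op p M)"
  unfolding quandle_connected_def Let_def
proof (intro ballI)
  fix y z assume y: "y \<in> Zp2 p" and z: "z \<in> Zp2 p"
  let ?R = "{(y, aff_op p M x y) |x y. x \<in> Zp2 p \<and> y \<in> Zp2 p}"
  have "p > 0" using \<open>prime p\<close> prime_gt_0_int by blast
  then have "zp2_add p z (zp2_neg p (mat_apply p M y)) \<in> mat_apply p (one_minus_mat M) ` Zp2 p"
    using bij_betw_mat_apply[OF assms] by (simp add: bij_betw_def zp2_add_in)
  then obtain x where "x \<in> Zp2 p"
    and "mat_apply p (one_minus_mat M) x = zp2_add p z (zp2_neg p (mat_apply p M y))"
    by (metis imageE)
  then have "aff_op p M x y = z"
    by (simp add: aff_op_eq_add zp2_add_neg_cancel z)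
  with \<open>x \<in> Zp2 p\<close> y have "(y, z) \<in> ?R" by blast
  then show "(y, z) \<in> (?R \<union> ?R\<inverse>)\<^sup>*" by (intro r_into_rtrancl UnI1)
qed

section \<open>The group of all bijections of a type\<close>

text \<open>Written additively, so that the library of \<open>group_add\<close> applies: \<open>w + v\<close> is \<open>w\<close> after \<open>v\<close>.\<close>
typedef 'a bijection = "{f :: 'a \<Rightarrow> 'a. bij f}" morphisms apply_bij Bij
  by (rule exI[of _ id]) simp

lemma bij_apply_bij: "bij (apply_bij w)"
  using apply_bij by blast

lemma apply_bij_Bij: "bij f \<Longrightarrow> apply_bij (Bij f) = f"
  by (simp add: Bij_inverse)

instantiation bijection :: (type) group_add
begin

definition "0 = Bij id"
definition "w + v = Bij (apply_bij w \<circ> apply_bij v)"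
definition "- w = Bij (inv (apply_bij w))"
definition "w - v = Bij (apply_bij w \<circ> inv (apply_bij v))"

lemma apply_bij_zero: "apply_bij 0 = id"
  by (simp add: zero_bijection_def apply_bij_Bij)

lemma apply_bij_plus: "apply_bij (w + v) = apply_bij w \<circ> apply_bij v"
  by (simp add: plus_bijection_def apply_bij_Bij bij_comp bij_apply_bij)

lemma apply_bij_uminus: "apply_bij (- w) = inv (apply_bij w)"
  by (simp add: uminus_bijection_def apply_bij_Bij bij_imp_bij_inv bij_apply_bij)

lemma apply_bij_minus: "apply_bij (w - v) = apply_bij w \<circ> inv (apply_bij v)"
  by (simp add: minus_bijection_def apply_bij_Bij bij_imp_bij_inv bij_apply_bij bij_comp)

instance
proof
  fix u v w :: "'a bijection"
  show "u + v + w = u + (v + w)"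
    by (simp add: apply_bij_inject[symmetric] apply_bij_plus o_assoc)
  show "0 + u = u" and "u + 0 = u"
    by (simp_all add: apply_bij_inject[symmetric] apply_bij_plus apply_bij_zero)
  show "- u + u = 0"
    by (simp add: apply_bij_inject[symmetric] apply_bij_plus apply_bij_zero apply_bij_uminus
        bij_is_inj bij_apply_bij)
  show "u + - v = u - v"
    by (simp add: apply_bij_inject[symmetric] apply_bij_plus apply_bij_minus apply_bij_uminus)
qed

end

lemma apply_bij_add: "apply_bij (w + v) x = apply_bij w (apply_bij v x)"
  by (simp add: apply_bij_plus)

lemma apply_bij_uminus_eqI: "apply_bij w x = y \<Longrightarrow> apply_bij (- w) y = x"
  by (metis apply_bij_uminus bij_apply_bij bij_inv_eq_iff)

declare add_uminus_conv_diff [simp del]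

lemma conj_eq_imp_inverse_conj:
  assumes "u + v = w + (u::'a::group_add)"
  shows "- u + w = v + - u"
proof -
  have "- u + w = - u + (w + u) + - u" by (simp add: add.assoc)
  also have "\<dots> = v + - u" by (simp flip: assms add: add.assoc)
  finally show ?thesis .
qed

lemma commute_uminus_right: "w + u = u + w \<Longrightarrow> w + - u = - u + (w::'a::group_add)"
  using conj_eq_imp_inverse_conj[of u w w] by simp

lemma commute_add_right:
  "w + u = u + w \<Longrightarrow> w + v = v + w \<Longrightarrow> w + (u + v) = (u + v) + (w::'a::group_add)"
  by (metis add.assoc)

lemma commute_conj:
  assumes "w + u = u + (w::'a::group_add)"
  shows "u + w + - u = w"
proof -
  have "u + w + - u = w + u + - u" using assms by simp
  then show ?thesis by (simp add: add.assoc)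
qed

lemma commute_left: "w + u = u + w \<Longrightarrow> w + (u + r) = u + (w + (r::'a::group_add))"
  by (simp flip: add.assoc)

lemma conj_add: "g + (u + v) + - g = (g + u + - g) + (g + v + - (g::'a::group_add))"
  by (simp add: add.assoc)

primrec nsmul :: "nat \<Rightarrow> 'a::monoid_add \<Rightarrow> 'a" where
  "nsmul 0 w = 0"
| "nsmul (Suc n) w = w + nsmul n w"

lemma nsmul_zero [simp]: "nsmul n 0 = 0"
  by (induction n) simp_all

lemma nsmul_add: "nsmul (m + n) w = nsmul m w + nsmul n w"
  by (induction m) (simp_all add: add.assoc)

lemma nsmul_mult: "nsmul (m * n) w = nsmul m (nsmul n w)"
  by (induction m) (simp_all add: nsmul_add)

lemma nsmul_commute: "w + nsmul n w = nsmul n w + w"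
  using nsmul_add[of 1 n w] nsmul_add[of n 1 w] by simp

lemma nsmul_uminus: "nsmul n (- w) = - nsmul n (w::'a::group_add)"
proof (induction n)
  case (Suc n)
  then show ?case by (simp add: minus_add nsmul_commute)
qed simp

lemma nsmul_eq_zero_coprime:
  fixes w :: "'a::monoid_add"
  assumes "nsmul m w = 0" and "nsmul n w = 0" and "coprime m n"
  shows "w = 0"
proof (cases "m = 0")
  case True
  with \<open>coprime m n\<close> have "n = 1" by simp
  with \<open>nsmul n w = 0\<close> show ?thesis by simp
next
  case False
  with \<open>coprime m n\<close> obtain x y where "m * x = n * y + 1"
    using bezout_nat[of m n] by auto
  then have "nsmul (x * m) w = nsmul (y * n) w + nsmul 1 w"
    by (metis mult.commute nsmul_add)
  with assms(1,2) show ?thesis by (simp add: nsmul_mult)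
qed

lemma nsmul_eq_imp_zero:
  fixes w :: "'a::group_add"
  assumes "nsmul m w = 0" and "nsmul i w = nsmul j w" and "coprime (int i - int j) (int m)"
  shows "w = 0"
  using assms(2,3)
proof (induction i j rule: linorder_wlog)
  case (le i j)
  have "nsmul i w + nsmul (j - i) w = nsmul j w"
    using le(1) by (simp flip: nsmul_add)
  also have "\<dots> = nsmul i w + 0"
    using le(2) by simp
  finally have "nsmul (j - i) w = 0"
    by (rule add_left_imp_eq)
  moreover have "int (j - i) = - (int i - int j)"
    using le(1) by simp
  then have "coprime (j - i) m"
    using le(3) by (metis coprime_int_iff coprime_minus_left_iff)
  ultimately show ?case
    using nsmul_eq_zero_coprime assms(1) by blast
next
  case (sym i j)
  then show ?case by (metis coprime_minus_left_iff minus_diff_eq)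
qed

section \<open>Cocycles of an arbitrary quandle\<close>

lemma is_quandle_closed: "is_quandle Q op \<Longrightarrow> x \<in> Q \<Longrightarrow> y \<in> Q \<Longrightarrow> op x y \<in> Q"
  unfolding is_quandle_def by blast

lemma is_quandle_bij: "is_quandle Q op \<Longrightarrow> x \<in> Q \<Longrightarrow> bij_betw (op x) Q Q"
  unfolding is_quandle_def by blast

lemma is_quandle_self_distrib:
  "is_quandle Q op \<Longrightarrow> x \<in> Q \<Longrightarrow> y \<in> Q \<Longrightarrow> z \<in> Q \<Longrightarrow> op x (op y z) = op (op x y) (op x z)"
  unfolding is_quandle_def by blast

lemma is_quandle_idem: "is_quandle Q op \<Longrightarrow> x \<in> Q \<Longrightarrow> op x x = x"
  unfolding is_quandle_def by blast

lemma quandle_cocycle_permutes: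
  "quandle_cocycle Q op S \<theta> \<Longrightarrow> x \<in> Q \<Longrightarrow> y \<in> Q \<Longrightarrow> \<theta> x y permutes S"
  unfolding quandle_cocycle_def by blast

lemma quandle_cocycle_cond:
  "quandle_cocycle Q op S \<theta> \<Longrightarrow> x \<in> Q \<Longrightarrow> y \<in> Q \<Longrightarrow> z \<in> Q \<Longrightarrow>
    \<theta> (op x y) (op x z) \<circ> \<theta> x z = \<theta> x (op y z) \<circ> \<theta> y z"
  unfolding quandle_cocycle_def by blast

lemma quandle_cocycle_diag: "quandle_cocycle Q op S \<theta> \<Longrightarrow> x \<in> Q \<Longrightarrow> \<theta> x x = id"
  unfolding quandle_cocycle_def by blast

definition cocycle_twist ::
  "('q \<Rightarrow> 'q \<Rightarrow> 'q) \<Rightarrow> ('q \<Rightarrow> 's \<Rightarrow> 's) \<Rightarrow> ('q \<Rightarrow> 'q \<Rightarrow> 's \<Rightarrow> 's) \<Rightarrow> 'q \<Rightarrow> 'q \<Rightarrow> 's \<Rightarrow> 's" where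
  "cocycle_twist op \<rho> \<theta> x y = inv (\<rho> (op x y)) \<circ> \<theta> x y \<circ> \<rho> y"

lemma quandle_cocycle_twist:
  assumes Q: "is_quandle Q op" and \<theta>: "quandle_cocycle Q op S \<theta>"
    and \<rho>: "\<forall>x\<in>Q. \<rho> x permutes S"
  shows "quandle_cocycle Q op S (cocycle_twist op \<rho> \<theta>)"
proof -
  have compose: "cocycle_twist op \<rho> \<theta> w (op u v) \<circ> cocycle_twist op \<rho> \<theta> u v
      = inv (\<rho> (op w (op u v))) \<circ> (\<theta> w (op u v) \<circ> \<theta> u v) \<circ> \<rho> v"
    if "u \<in> Q" "v \<in> Q" for w u v
  proof -
    have "\<rho> (op u v) permutes S"
      using \<rho> is_quandle_closed[OF Q that] by blast
    then have "\<rho> (op u v) (inv (\<rho> (op u v)) t) = t" for t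
      by (rule permutes_inverses(1))
    then show ?thesis by (simp add: cocycle_twist_def fun_eq_iff)
  qed
  have "cocycle_twist op \<rho> \<theta> (op x y) (op x z) \<circ> cocycle_twist op \<rho> \<theta> x z
      = cocycle_twist op \<rho> \<theta> x (op y z) \<circ> cocycle_twist op \<rho> \<theta> y z"
    if "x \<in> Q" "y \<in> Q" "z \<in> Q" for x y z
    using that is_quandle_self_distrib[OF Q that] quandle_cocycle_cond[OF \<theta> that]
    by (simp add: compose)
  moreover have "cocycle_twist op \<rho> \<theta> x x = id" if "x \<in> Q" for x
  proof -
    have "\<rho> x permutes S"
      using \<rho> that by blast
    then have "inv (\<rho> x) \<circ> \<rho> x = id"
      by (rule permutes_inv_o(2))
    then show ?thesis
      by (simp add: cocycle_twist_def is_quandle_idem[OF Q that] quandle_cocycle_diag[OF \<theta> that])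
  qed
  moreover have "cocycle_twist op \<rho> \<theta> x y permutes S" if "x \<in> Q" "y \<in> Q" for x y
    using \<rho> that quandle_cocycle_permutes[OF \<theta> that] is_quandle_closed[OF Q that]
    unfolding cocycle_twist_def by (blast intro: permutes_compose permutes_inv)
  ultimately show ?thesis
    by (simp add: quandle_cocycle_def)
qed

lemma cohomologous_trivial_if_twist_trivial:
  assumes Q: "is_quandle Q op" and \<rho>: "\<forall>x\<in>Q. \<rho> x permutes S"
    and trivial: "\<forall>x\<in>Q. \<forall>y\<in>Q. cocycle_twist op \<rho> \<theta> x y = id"
  shows "cohomologous_trivial Q op S \<theta>"
  unfolding cohomologous_trivial_def
proof (intro exI conjI ballI)
  fix x y assume "x \<in> Q" "y \<in> Q"
  show "\<theta> x y = \<rho> (op x y) \<circ> inv (\<rho> y)"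
  proof
    fix s
    have "\<rho> (op x y) permutes S" "\<rho> y permutes S"
      using \<rho> is_quandle_closed[OF Q] \<open>x \<in> Q\<close> \<open>y \<in> Q\<close> by blast+
    moreover have "inv (\<rho> (op x y)) (\<theta> x y (\<rho> y (inv (\<rho> y) s))) = inv (\<rho> y) s"
      using trivial \<open>x \<in> Q\<close> \<open>y \<in> Q\<close> by (simp add: cocycle_twist_def fun_eq_iff)
    ultimately show "\<theta> x y s = (\<rho> (op x y) \<circ> inv (\<rho> y)) s"
      by (metis comp_apply permutes_inverses(1))
  qed
qed (use \<rho> in blast)

lemma cocycle_normalize:
  assumes Q: "is_quandle Q op" and \<theta>: "quandle_cocycle Q op S \<theta>"
    and "b \<in> Q" and bij_b: "bij_betw (\<lambda>x. op x b) Q Q"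
  obtains \<rho> where "\<forall>x\<in>Q. \<rho> x permutes S" and "\<forall>x\<in>Q. cocycle_twist op \<rho> \<theta> x b = id"
proof
  define \<rho> where "\<rho> z = \<theta> (inv_into Q (\<lambda>x. op x b) z) b" for z
  have inv_b: "inv_into Q (\<lambda>x. op x b) (op x b) = x" if "x \<in> Q" for x
    using bij_betw_inv_into_left[OF bij_b that] .
  show "\<forall>x\<in>Q. \<rho> x permutes S"
    unfolding \<rho>_def
    using quandle_cocycle_permutes[OF \<theta> _ \<open>b \<in> Q\<close>] bij_betw_inv_into[OF bij_b] bij_betwE by blast
  have "\<rho> b = id"
    using inv_b[OF \<open>b \<in> Q\<close>] by (simp add: \<rho>_def is_quandle_idem[OF Q \<open>b \<in> Q\<close>] quandle_cocycle_diag[OF \<theta> \<open>b \<in> Q\<close>])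
  moreover have "inv (\<theta> x b) \<circ> \<theta> x b = id" if "x \<in> Q" for x
    using quandle_cocycle_permutes[OF \<theta> that \<open>b \<in> Q\<close>] by (rule permutes_inv_o(2))
  ultimately show "\<forall>x\<in>Q. cocycle_twist op \<rho> \<theta> x b = id"
    using inv_b by (simp add: cocycle_twist_def \<rho>_def)
qed

lemma coboundary_path_independent:
  assumes Q: "is_quandle Q op" and \<theta>: "cohomologous_trivial Q op S \<theta>"
    and "x \<in> Q" "y \<in> Q" "x' \<in> Q" "y' \<in> Q" "z \<in> Q"
    and "op x (op y z) = op x' (op y' z)"
  shows "\<theta> x (op y z) \<circ> \<theta> y z = \<theta> x' (op y' z) \<circ> \<theta> y' z"
proof -
  obtain \<gamma> where \<gamma>: "\<forall>x\<in>Q. \<gamma> x permutes S" "\<forall>x\<in>Q. \<forall>y\<in>Q. \<theta> x y = \<gamma> (op x y) \<circ> inv (\<gamma> y)"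
    using \<theta> unfolding cohomologous_trivial_def by blast
  have path: "\<theta> u (op v z) \<circ> \<theta> v z = \<gamma> (op u (op v z)) \<circ> inv (\<gamma> z)"
    if "u \<in> Q" "v \<in> Q" for u v
  proof -
    have "op v z \<in> Q" using is_quandle_closed[OF Q that(2) \<open>z \<in> Q\<close>] .
    then have "\<gamma> (op v z) permutes S" using \<gamma>(1) by blast
    then have "inv (\<gamma> (op v z)) (\<gamma> (op v z) t) = t" for t
      by (rule permutes_inverses(2))
    then show ?thesis
      using \<gamma>(2) that \<open>z \<in> Q\<close> \<open>op v z \<in> Q\<close> by (simp add: fun_eq_iff)
  qed
  show ?thesis
    using path[of x y] path[of x' y'] assms(3-) by simp
qed

lemma bij_fibrewise:
  assumes f: "bij_betw f Q Q" and g: "\<And>y. y \<in> Q \<Longrightarrow> bij (g y)"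
  shows "bij (\<lambda>(y, s). if y \<in> Q then (f y, g y s) else (y, s))"
proof (rule o_bij)
  let ?h = "\<lambda>(z, t). if z \<in> Q then (inv_into Q f z, inv (g (inv_into Q f z)) t) else (z, t)"
  show "?h \<circ> (\<lambda>(y, s). if y \<in> Q then (f y, g y s) else (y, s)) = id"
    using f g by (auto simp: fun_eq_iff bij_betw_inv_into_left bij_betw_apply bij_is_inj)
  have "inv_into Q f z \<in> Q" "f (inv_into Q f z) = z" if "z \<in> Q" for z
    using f that by (auto simp: bij_betw_def inv_into_into f_inv_into_f)
  then show "(\<lambda>(y, s). if y \<in> Q then (f y, g y s) else (y, s)) \<circ> ?h = id"
    using g by (auto simp: fun_eq_iff bij_is_surj surj_f_inv_f)
qed

locale quandle_with_cocycle =
  fixes Q :: "'q set" and op :: "'q \<Rightarrow> 'q \<Rightarrow> 'q" (infixl "\<triangleright>" 70)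
    and S :: "'s set" and \<theta> :: "'q \<Rightarrow> 'q \<Rightarrow> 's \<Rightarrow> 's"
  assumes quandle: "is_quandle Q (\<triangleright>)" and cocycle: "quandle_cocycle Q (\<triangleright>) S \<theta>"
begin

text \<open>The left translation by \<open>(x, s)\<close> in the extension quandle \<open>Q \<times>\<^sub>\<theta> S\<close>; it does not
  depend on \<open>s\<close>. Points outside \<open>Q\<close> are fixed, so that it is a bijection of the whole type.\<close>
definition ext_trans :: "'q \<Rightarrow> ('q \<times> 's) bijection" where
  "ext_trans x = Bij (\<lambda>(y, s). if y \<in> Q then (x \<triangleright> y, \<theta> x y s) else (y, s))"

lemma apply_ext_trans:
  assumes "x \<in> Q"
  shows "apply_bij (ext_trans x) = (\<lambda>(y, s). if y \<in> Q then (x \<triangleright> y, \<theta> x y s) else (y, s))"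
proof -
  have "bij (\<theta> x y)" if "y \<in> Q" for y
    using quandle_cocycle_permutes[OF cocycle assms that] by (rule permutes_bij)
  with is_quandle_bij[OF quandle assms] show ?thesis
    unfolding ext_trans_def by (intro apply_bij_Bij bij_fibrewise)
qed

lemma apply_ext_trans_in: "x \<in> Q \<Longrightarrow> y \<in> Q \<Longrightarrow> apply_bij (ext_trans x) (y, s) = (x \<triangleright> y, \<theta> x y s)"
  by (simp add: apply_ext_trans)

lemma ext_trans_rel:
  assumes "x \<in> Q" "y \<in> Q"
  shows "ext_trans x + ext_trans y = ext_trans (x \<triangleright> y) + ext_trans x"
proof -
  have xy: "x \<triangleright> y \<in> Q" using is_quandle_closed[OF quandle assms] .
  have "apply_bij (ext_trans x + ext_trans y) (z, s) = apply_bij (ext_trans (x \<triangleright> y) + ext_trans x) (z, s)"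
    for z s
  proof (cases "z \<in> Q")
    case True
    have "\<theta> x (y \<triangleright> z) (\<theta> y z s) = \<theta> (x \<triangleright> y) (x \<triangleright> z) (\<theta> x z s)"
      using quandle_cocycle_cond[OF cocycle assms True] by (metis comp_apply)
    then show ?thesis
      using assms True xy is_quandle_closed[OF quandle] is_quandle_self_distrib[OF quandle assms True]
      by (simp add: apply_bij_add apply_ext_trans_in)
  next
    case False
    then show ?thesis
      using assms xy by (simp add: apply_bij_add apply_ext_trans)
  qed
  then show ?thesis
    by (simp add: apply_bij_inject[symmetric] fun_eq_iff)
qed

end

locale aff_Zp2 =
  fixes p :: int and M :: mat2
  assumes prime_p: "prime p"
    and det_coprime: "\<not> p dvd mat_det M"
    and det_one_minus_coprime: "\<not> p dvd mat_det (one_minus_mat M)"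
begin

abbreviation op :: "int \<times> int \<Rightarrow> int \<times> int \<Rightarrow> int \<times> int" (infixl "\<triangleright>" 70) where
  "x \<triangleright> y \<equiv> aff_op p M x y"

abbreviation add :: "int \<times> int \<Rightarrow> int \<times> int \<Rightarrow> int \<times> int" (infixl "\<oplus>" 65) where
  "u \<oplus> v \<equiv> zp2_add p u v"

abbreviation F :: "int \<times> int \<Rightarrow> int \<times> int" where
  "F \<equiv> mat_apply p M"

abbreviation G :: "int \<times> int \<Rightarrow> int \<times> int" where
  "G \<equiv> mat_apply p (one_minus_mat M)"

lemma p_pos: "p > 0"
  using prime_p prime_gt_0_int by blast

lemma in_Zp2 [simp]:
  "x \<triangleright> y \<in> Zp2 p" "u \<oplus> v \<in> Zp2 p" "F u \<in> Zp2 p" "G u \<in> Zp2 p"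
  "zp2_neg p u \<in> Zp2 p" "zp2_smul p n u \<in> Zp2 p"
  "(0, 0) \<in> Zp2 p" "(1, 0) \<in> Zp2 p" "(0, 1) \<in> Zp2 p"
  using p_pos prime_gt_1_int[OF prime_p]
  by (simp_all add: aff_op_in zp2_add_in mat_apply_in zp2_neg_in zp2_smul_in) (simp_all add: mem_Zp2)

lemma op_eq_add: "x \<triangleright> y = G x \<oplus> F y"
  by (rule aff_op_eq_add)

lemma op_zero_right: "x \<in> Zp2 p \<Longrightarrow> x \<triangleright> (0, 0) = G x"
  by (simp add: op_eq_add mat_apply_zero zp2_add_zero)

lemma op_zero_left: "y \<in> Zp2 p \<Longrightarrow> (0, 0) \<triangleright> y = F y"
  by (simp add: op_eq_add mat_apply_zero zp2_zero_add)

lemma bij_F: "bij_betw F (Zp2 p) (Zp2 p)"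
  using bij_betw_mat_apply[OF prime_p det_coprime] .

lemma bij_G: "bij_betw G (Zp2 p) (Zp2 p)"
  using bij_betw_mat_apply[OF prime_p det_one_minus_coprime] .

lemma F_surj: "z \<in> Zp2 p \<Longrightarrow> \<exists>x\<in>Zp2 p. F x = z"
  using bij_betw_imp_surj_on[OF bij_F] by (metis imageE)

lemma G_surj: "z \<in> Zp2 p \<Longrightarrow> \<exists>x\<in>Zp2 p. G x = z"
  using bij_betw_imp_surj_on[OF bij_G] by (metis imageE)

lemma quandle: "is_quandle (Zp2 p) (\<triangleright>)"
  using is_quandle_aff_op[OF prime_p det_coprime] .

end

section \<open>Normalised cocycles of Aff(Z_p^2, M)\<close>

locale aff_Zp2_cocycle = aff_Zp2 p M + quandle_with_cocycle "Zp2 p" "aff_op p M" S \<theta>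
  for p M and S :: "'s set" and \<theta> +
  assumes normalized: "\<forall>x\<in>Zp2 p. \<theta> x (0, 0) = id"
begin

abbreviation e0 :: "((int \<times> int) \<times> 's) bijection" where
  "e0 \<equiv> ext_trans (0, 0)"

text \<open>Conjugation by \<open>shift x\<close> translates the base points by \<open>G x\<close>.\<close>
definition shift :: "int \<times> int \<Rightarrow> ((int \<times> int) \<times> 's) bijection" where
  "shift x = ext_trans x + - e0"

definition defect :: "int \<times> int \<Rightarrow> int \<times> int \<Rightarrow> ((int \<times> int) \<times> 's) bijection" where
  "defect x y = shift x + shift y + - shift (x \<oplus> y)"

definition comm :: "int \<times> int \<Rightarrow> int \<times> int \<Rightarrow> ((int \<times> int) \<times> 's) bijection" where
  "comm x y = shift x + shift y + - shift x + - shift y"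

definition central :: "((int \<times> int) \<times> 's) bijection \<Rightarrow> bool" where
  "central w \<longleftrightarrow> (\<forall>z\<in>Zp2 p. w + ext_trans z = ext_trans z + w)"

lemma e0_ext_trans_rel: "y \<in> Zp2 p \<Longrightarrow> e0 + ext_trans y = ext_trans (F y) + e0"
  using ext_trans_rel[of "(0, 0)" y] by (simp add: op_zero_left)

lemma ext_trans_e0_rel: "x \<in> Zp2 p \<Longrightarrow> ext_trans x + e0 = ext_trans (G x) + ext_trans x"
  using ext_trans_rel[of x "(0, 0)"] by (simp add: op_zero_right)

lemma shift_zero: "shift (0, 0) = 0"
  by (simp add: shift_def)

lemma shift_conj:
  assumes "x \<in> Zp2 p" "z \<in> Zp2 p"
  shows "shift x + ext_trans z = ext_trans (z \<oplus> G x) + shift x"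
proof -
  obtain y where y: "y \<in> Zp2 p" "F y = z" using F_surj[OF assms(2)] by blast
  have "- e0 + ext_trans z = ext_trans y + - e0"
    using e0_ext_trans_rel[OF y(1)] y(2) by (intro conj_eq_imp_inverse_conj) simp
  then have "shift x + ext_trans z = ext_trans x + ext_trans y + - e0"
    by (simp add: shift_def add.assoc)
  also have "\<dots> = ext_trans (x \<triangleright> y) + shift x"
    using ext_trans_rel[OF assms(1) y(1)] by (simp add: shift_def add.assoc)
  also have "x \<triangleright> y = z \<oplus> G x"
    using y(2) by (simp add: op_eq_add zp2_add_commute)
  finally show ?thesis .
qed

lemma shift_uminus_conj:
  assumes "x \<in> Zp2 p" "z \<in> Zp2 p"
  shows "- shift x + ext_trans z = ext_trans (z \<oplus> zp2_neg p (G x)) + - shift x"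
proof -
  have "shift x + ext_trans (z \<oplus> zp2_neg p (G x)) = ext_trans z + shift x"
    using shift_conj[OF assms(1), of "z \<oplus> zp2_neg p (G x)"] assms(2)
    by (simp add: zp2_add_neg_cancel)
  then show ?thesis by (rule conj_eq_imp_inverse_conj)
qed

text \<open>Conjugation by \<open>defect x y\<close> translates by \<open>G x + G y - G (x + y) = 0\<close>.\<close>
lemma central_defect:
  assumes x: "x \<in> Zp2 p" and y: "y \<in> Zp2 p"
  shows "central (defect x y)"
  unfolding central_def
proof
  fix z assume z: "z \<in> Zp2 p"
  define z0 where "z0 = z \<oplus> zp2_neg p (G (x \<oplus> y))"
  define z1 where "z1 = z0 \<oplus> G y"
  have z1_back: "z1 \<oplus> G x = z"
    using z by (simp add: z0_def z1_def mat_apply_add zp2_add_assoc zp2_add_commute[of p "G y" "G x"]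
        zp2_neg_add zp2_add_zero)
  have "defect x y + ext_trans z = shift x + (shift y + (- shift (x \<oplus> y) + ext_trans z))"
    by (simp add: defect_def add.assoc)
  also have "\<dots> = shift x + ((shift y + ext_trans z0) + - shift (x \<oplus> y))"
    using shift_uminus_conj[OF _ z, of "x \<oplus> y"] by (simp add: z0_def add.assoc)
  also have "\<dots> = (shift x + ext_trans z1) + (shift y + - shift (x \<oplus> y))"
    using shift_conj[OF y, of z0] by (simp add: z0_def z1_def add.assoc)
  also have "\<dots> = ext_trans z + defect x y"
    using shift_conj[OF x, of z1] z1_back by (simp add: z1_def defect_def add.assoc)
  finally show "defect x y + ext_trans z = ext_trans z + defect x y" .
qed

lemma central_uminus:
  assumes "central w"
  shows "central (- w)"
  unfolding central_def
proof
  fix z assume "z \<in> Zp2 p"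
  then have "ext_trans z + w = w + ext_trans z"
    using assms by (simp add: central_def)
  from commute_uminus_right[OF this] show "- w + ext_trans z = ext_trans z + - w"
    by simp
qed

lemma central_add:
  assumes "central w" "central v"
  shows "central (w + v)"
  unfolding central_def
proof
  fix z assume "z \<in> Zp2 p"
  then have hw: "w + ext_trans z = ext_trans z + w" and hv: "v + ext_trans z = ext_trans z + v"
    using assms by (simp_all add: central_def)
  have "w + v + ext_trans z = (w + ext_trans z) + v"
    by (simp add: add.assoc hv)
  also have "\<dots> = ext_trans z + (w + v)"
    by (simp add: add.assoc hw)
  finally show "w + v + ext_trans z = ext_trans z + (w + v)" .
qed

lemma central_commute_shift: "central w \<Longrightarrow> x \<in> Zp2 p \<Longrightarrow> w + shift x = shift x + w"
  unfolding shift_def central_def by (intro commute_add_right commute_uminus_right) simp_all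

lemma central_commute_uminus_shift: "central w \<Longrightarrow> x \<in> Zp2 p \<Longrightarrow> w + - shift x = - shift x + w"
  by (intro commute_uminus_right central_commute_shift)

lemma central_commute_comm:
  "central w \<Longrightarrow> x \<in> Zp2 p \<Longrightarrow> y \<in> Zp2 p \<Longrightarrow> w + comm x y = comm x y + w"
  unfolding comm_def
  by (intro commute_add_right central_commute_shift central_commute_uminus_shift) simp_all

lemma comm_eq_defect: "comm x y = defect x y + - defect y x"
  by (simp add: comm_def defect_def zp2_add_commute[of p y x] add.assoc minus_add)

lemma central_comm: "x \<in> Zp2 p \<Longrightarrow> y \<in> Zp2 p \<Longrightarrow> central (comm x y)"
  by (simp add: comm_eq_defect central_add central_uminus central_defect)

lemma conj_central: "central w \<Longrightarrow> x \<in> Zp2 p \<Longrightarrow> shift x + w + - shift x = w"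
  by (intro commute_conj central_commute_shift)

lemma comm_swap: "comm y x = - comm x y"
  by (simp add: comm_def add.assoc minus_add)

lemma comm_self: "comm x x = 0"
  by (simp add: comm_def add.assoc)

lemma comm_zero_left: "comm (0, 0) y = 0"
  by (simp add: comm_def shift_zero)

lemma comm_zero_right: "comm x (0, 0) = 0"
  by (simp add: comm_def shift_zero)

lemma conj_shift: "shift x + shift y + - shift x = comm x y + shift y"
  by (simp add: comm_def add.assoc)

lemma e0_conj_shift:
  assumes "x \<in> Zp2 p"
  shows "e0 + shift x + - e0 = shift (F x)"
proof -
  have "e0 + shift x + - e0 = (e0 + ext_trans x) + - e0 + - e0"
    by (simp add: shift_def add.assoc)
  also have "\<dots> = shift (F x)"
    by (simp add: e0_ext_trans_rel[OF assms] shift_def add.assoc)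
  finally show ?thesis .
qed

lemma shift_conj_shift_F:
  assumes x: "x \<in> Zp2 p" and y: "y \<in> Zp2 p"
  shows "shift x + shift (F y) + - shift x = shift (x \<triangleright> y) + - shift (G x)"
proof -
  have e0_inv: "- e0 + ext_trans (F y) = ext_trans y + - e0"
    using e0_ext_trans_rel[OF y] by (intro conj_eq_imp_inverse_conj) simp
  have "ext_trans x + e0 + - ext_trans x = ext_trans (G x)"
    using ext_trans_e0_rel[OF x] by (simp add: add.assoc)
  then have "- ext_trans (G x) = - (ext_trans x + e0 + - ext_trans x)"
    by simp
  then have Gx: "ext_trans x + - e0 + - ext_trans x = - ext_trans (G x)"
    by (simp add: minus_add add.assoc)
  have "shift x + shift (F y) + - shift x = ext_trans x + (- e0 + ext_trans (F y)) + - ext_trans x"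
    by (simp add: shift_def add.assoc minus_add)
  also have "\<dots> = ext_trans x + ext_trans y + - e0 + - ext_trans x"
    by (simp only: e0_inv add.assoc)
  also have "\<dots> = ext_trans (x \<triangleright> y) + (ext_trans x + - e0 + - ext_trans x)"
    by (simp only: ext_trans_rel[OF x y] add.assoc)
  also have "\<dots> = ext_trans (x \<triangleright> y) + - ext_trans (G x)"
    by (simp only: Gx)
  also have "\<dots> = shift (x \<triangleright> y) + - shift (G x)"
    by (simp add: shift_def add.assoc minus_add)
  finally show ?thesis .
qed

lemma comm_F_right:
  assumes x: "x \<in> Zp2 p" and y: "y \<in> Zp2 p"
  shows "comm x (F y) = - defect (F y) (G x)"
proof -
  have "shift (x \<triangleright> y) = - defect (F y) (G x) + (shift (F y) + shift (G x))"
    by (simp add: defect_def op_eq_add zp2_add_commute add.assoc minus_add)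
  then have "shift x + shift (F y) + - shift x = - defect (F y) (G x) + shift (F y)"
    using shift_conj_shift_F[OF x y] by (simp add: add.assoc)
  then show ?thesis
    by (simp add: comm_def add.assoc)
qed

lemma defect_F:
  assumes x: "x \<in> Zp2 p" and y: "y \<in> Zp2 p"
  shows "defect (F x) (F y) = defect x y"
proof -
  have "defect x y = e0 + defect x y + - e0"
    using central_defect[OF x y] by (simp add: central_def commute_conj)
  also have "\<dots> = (e0 + shift x + - e0) + (e0 + shift y + - e0) + - (e0 + shift (x \<oplus> y) + - e0)"
    by (simp add: defect_def add.assoc minus_add)
  also have "\<dots> = defect (F x) (F y)"
    by (simp add: e0_conj_shift x y defect_def mat_apply_add)
  finally show ?thesis ..
qed

lemma comm_F: "x \<in> Zp2 p \<Longrightarrow> y \<in> Zp2 p \<Longrightarrow> comm (F x) (F y) = comm x y"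
  by (simp add: comm_eq_defect defect_F)

lemma comm_add_right:
  assumes x: "x \<in> Zp2 p" and y: "y \<in> Zp2 p" and z: "z \<in> Zp2 p"
  shows "comm x (y \<oplus> z) = comm x y + comm x z"
proof -
  define d where "d = - defect y z"
  have d: "central d" unfolding d_def using central_uminus[OF central_defect[OF y z]] .
  have syz: "shift (y \<oplus> z) = d + (shift y + shift z)"
    by (simp add: d_def defect_def add.assoc minus_add)
  have "comm x (y \<oplus> z) + shift (y \<oplus> z) = shift x + shift (y \<oplus> z) + - shift x"
    by (simp only: conj_shift)
  also have "\<dots> = (shift x + d + - shift x) + ((shift x + shift y + - shift x) + (shift x + shift z + - shift x))"
    by (simp only: syz conj_add)
  also have "\<dots> = d + (comm x y + (shift y + (comm x z + shift z)))"
    by (simp only: conj_central[OF d x] conj_shift) (simp add: add.assoc)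
  also have "\<dots> = comm x y + (comm x z + (d + (shift y + shift z)))"
    using commute_left[OF central_commute_comm[OF d x y]]
      commute_left[OF central_commute_shift[OF central_comm[OF x z] y, symmetric]]
      commute_left[OF central_commute_comm[OF d x z]]
    by simp
  also have "\<dots> = comm x y + comm x z + shift (y \<oplus> z)"
    by (simp only: syz add.assoc)
  finally show ?thesis
    by simp
qed

lemma comm_add_left:
  assumes "x \<in> Zp2 p" "y \<in> Zp2 p" "z \<in> Zp2 p"
  shows "comm (x \<oplus> y) z = comm x z + comm y z"
proof -
  have "comm (x \<oplus> y) z = - (comm z x + comm z y)"
    by (simp add: comm_swap[of "x \<oplus> y"] comm_add_right[OF assms(3,1,2)])
  also have "\<dots> = comm y z + comm x z"
    by (simp add: minus_add comm_swap[of _ z])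
  also have "\<dots> = comm x z + comm y z"
    using central_commute_comm[OF central_comm[OF assms(2,3)] assms(1,3)] .
  finally show ?thesis .
qed

lemma comm_smul_left: "x \<in> Zp2 p \<Longrightarrow> y \<in> Zp2 p \<Longrightarrow> comm (zp2_smul p n x) y = nsmul n (comm x y)"
  by (induction n) (simp_all add: zp2_smul_0 zp2_smul_Suc comm_zero_left comm_add_left)

lemma comm_smul_right: "x \<in> Zp2 p \<Longrightarrow> y \<in> Zp2 p \<Longrightarrow> comm x (zp2_smul p n y) = nsmul n (comm x y)"
  by (induction n) (simp_all add: zp2_smul_0 zp2_smul_Suc comm_zero_right comm_add_right)

lemma comm_eq_det_form:
  assumes u: "u \<in> Zp2 p" and v: "v \<in> Zp2 p"
  shows "comm u v = nsmul (nat (fst u) * nat (snd v)) (comm (1, 0) (0, 1))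
    + - nsmul (nat (snd u) * nat (fst v)) (comm (1, 0) (0, 1))"
proof -
  let ?e1 = "(1, 0) :: int \<times> int" and ?e2 = "(0, 1) :: int \<times> int"
  let ?v = "zp2_smul p (nat (fst v)) ?e1 \<oplus> zp2_smul p (nat (snd v)) ?e2"
  have "comm ?e1 v = comm ?e1 ?v" and "comm ?e2 v = comm ?e2 ?v"
    using zp2_decompose[OF v] by (rule arg_cong)+
  then have e1v: "comm ?e1 v = nsmul (nat (snd v)) (comm ?e1 ?e2)"
    and e2v: "comm ?e2 v = nsmul (nat (fst v)) (- comm ?e1 ?e2)"
    by (simp_all add: comm_add_right comm_smul_right comm_self comm_swap[of ?e2 ?e1])
  have "comm u v = comm (zp2_smul p (nat (fst u)) ?e1 \<oplus> zp2_smul p (nat (snd u)) ?e2) v"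
    using zp2_decompose[OF u] by (rule arg_cong)
  also have "\<dots> = nsmul (nat (fst u)) (comm ?e1 v) + nsmul (nat (snd u)) (comm ?e2 v)"
    using v by (simp add: comm_add_left comm_smul_left)
  finally show ?thesis
    by (simp add: e1v e2v nsmul_mult nsmul_uminus)
qed

lemma nsmul_modulus_comm_eq_zero: "nsmul (nat p) (comm x y) = 0" if "x \<in> Zp2 p" "y \<in> Zp2 p"
  using comm_smul_left[OF that, of "nat p"] p_pos by (simp add: zp2_smul_modulus comm_zero_left)

lemma apply_e0_base: "apply_bij e0 ((0, 0), s) = ((0, 0), s)"
  by (simp add: apply_ext_trans_in aff_op_idem normalized)

lemma apply_shift_base: "x \<in> Zp2 p \<Longrightarrow> apply_bij (shift x) ((0, 0), s) = (G x, s)"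
  using apply_bij_uminus_eqI[OF apply_e0_base]
  by (simp add: shift_def apply_bij_add apply_ext_trans_in op_zero_right normalized)

context
  assumes det_ne_one: "\<not> p dvd mat_det M - 1"
begin

text \<open>Conjugation by \<open>e\<^sub>0\<close> scales the determinant form by \<open>det M\<close>, and \<open>p\<close> kills it.\<close>
lemma comm_basis_eq_zero: "comm (1, 0) (0, 1) = 0"
proof -
  obtain a b c d where M: "M = (a, b, c, d)" by (cases M) auto
  let ?\<kappa> = "comm (1, 0) (0, 1)"
  define A where "A = nat (a mod p) * nat (d mod p)"
  define B where "B = nat (c mod p) * nat (b mod p)"
  have F: "F (1, 0) = (a mod p, c mod p)" "F (0, 1) = (b mod p, d mod p)"
    by (simp_all add: M mat_apply_def)
  have "?\<kappa> = comm (F (1, 0)) (F (0, 1))"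
    by (simp add: comm_F)
  also have "\<dots> = nsmul A ?\<kappa> + - nsmul B ?\<kappa>"
    using comm_eq_det_form[of "F (1, 0)" "F (0, 1)"] p_pos
    by (simp add: F A_def B_def mod_pair_in_Zp2)
  finally have "?\<kappa> + nsmul B ?\<kappa> = nsmul A ?\<kappa> + - nsmul B ?\<kappa> + nsmul B ?\<kappa>"
    by (rule arg_cong[where f = "\<lambda>t. t + nsmul B ?\<kappa>"])
  then have "nsmul (Suc B) ?\<kappa> = nsmul A ?\<kappa>"
    by (simp add: add.assoc)
  moreover have "[int (Suc B) - int A = - (mat_det M - 1)] (mod p)"
    using p_pos unfolding A_def B_def M mat_det_def cong_def
    by (simp add: nat_mult_distrib) (rule mod_eq_by_cong, (rule cong_strip)+, simp add: algebra_simps)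
  then have "p dvd int (Suc B) - int A \<longleftrightarrow> p dvd - (mat_det M - 1)"
    by (rule cong_dvd_iff)
  then have "\<not> p dvd int (Suc B) - int A"
    using det_ne_one by (simp only: dvd_minus_iff not_False_eq_True)
  then have "coprime (int (Suc B) - int A) (int (nat p))"
    using prime_p p_pos by (simp add: prime_imp_coprime coprime_commute)
  ultimately show ?thesis
    by (rule nsmul_eq_imp_zero[OF nsmul_modulus_comm_eq_zero[OF in_Zp2(8,9)]])
qed

lemma comm_eq_zero: "x \<in> Zp2 p \<Longrightarrow> y \<in> Zp2 p \<Longrightarrow> comm x y = 0"
  by (simp add: comm_eq_det_form comm_basis_eq_zero)

lemma defect_eq_zero:
  assumes "u \<in> Zp2 p" "v \<in> Zp2 p"
  shows "defect u v = 0"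
proof -
  obtain y where y: "y \<in> Zp2 p" "F y = u" using F_surj[OF assms(1)] by blast
  obtain x where x: "x \<in> Zp2 p" "G x = v" using G_surj[OF assms(2)] by blast
  show ?thesis
    using comm_F_right[OF x(1) y(1)] comm_eq_zero[OF x(1) assms(1)] x y by simp
qed

lemma shift_add:
  assumes "x \<in> Zp2 p" "y \<in> Zp2 p"
  shows "shift x + shift y = shift (x \<oplus> y)"
proof -
  have "shift x + shift y + - shift (x \<oplus> y) = 0"
    using defect_eq_zero[OF assms] by (simp add: defect_def)
  then show ?thesis by (simp add: add_uminus_conv_diff)
qed

lemma apply_shift:
  assumes x: "x \<in> Zp2 p" and z: "z \<in> Zp2 p"
  shows "apply_bij (shift x) (z, s) = (z \<oplus> G x, s)"
proof -
  obtain w where w: "w \<in> Zp2 p" "G w = z" using G_surj[OF z] by blast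
  have "apply_bij (shift x) (z, s) = apply_bij (shift x + shift w) ((0, 0), s)"
    using w by (simp add: apply_bij_add apply_shift_base)
  also have "\<dots> = (G (x \<oplus> w), s)"
    using x w by (simp add: shift_add apply_shift_base)
  finally show ?thesis
    using w by (simp add: mat_apply_add zp2_add_commute)
qed

lemma cocycle_zero_left: "z \<in> Zp2 p \<Longrightarrow> \<theta> (0, 0) z = id"
proof
  fix s assume z: "z \<in> Zp2 p"
  obtain x where x: "x \<in> Zp2 p" "G x = z" using G_surj[OF z] by blast
  have "e0 + shift x = e0 + shift x + - e0 + e0"
    by (simp add: add.assoc)
  also have "\<dots> = shift (F x) + e0"
    by (simp only: e0_conj_shift[OF x(1)])
  finally have "apply_bij e0 (apply_bij (shift x) ((0, 0), s))
      = apply_bij (shift (F x)) (apply_bij e0 ((0, 0), s))"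
    by (simp flip: apply_bij_add)
  then show "\<theta> (0, 0) z s = id s"
    using x z by (simp add: apply_shift_base apply_e0_base apply_ext_trans_in op_zero_left
        mat_apply_one_minus_commute)
qed

theorem cocycle_trivial:
  assumes "x \<in> Zp2 p" "y \<in> Zp2 p"
  shows "\<theta> x y = id"
proof
  fix s
  have "ext_trans x = shift x + e0"
    by (simp add: shift_def add.assoc)
  then have "apply_bij (ext_trans x) (y, s) = apply_bij (shift x) (apply_bij e0 (y, s))"
    by (simp flip: apply_bij_add)
  also have "\<dots> = (F y \<oplus> G x, s)"
    using assms by (simp add: apply_ext_trans_in op_zero_left cocycle_zero_left apply_shift)
  finally show "\<theta> x y s = id s"
    using assms by (simp add: apply_ext_trans_in)
qed

end

end

context aff_Zp2
begin

theorem simply_connected_if_det_ne_one: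
  assumes det_ne_one: "\<not> p dvd mat_det M - 1"
  shows "simply_connected (Zp2 p) (\<triangleright>) TYPE('s)"
  unfolding simply_connected_def
proof (intro conjI allI impI)
  show "quandle_connected (Zp2 p) (\<triangleright>)"
    using quandle_connected_aff_op[OF prime_p det_one_minus_coprime] .
next
  fix S :: "'s set" and \<theta>
  assume \<theta>: "quandle_cocycle (Zp2 p) (\<triangleright>) S \<theta>"
  have "bij_betw (\<lambda>x. x \<triangleright> (0, 0)) (Zp2 p) (Zp2 p)"
    using bij_G by (rule bij_betw_cong[THEN iffD1, rotated]) (simp add: op_zero_right)
  then obtain \<rho> where \<rho>: "\<forall>x\<in>Zp2 p. \<rho> x permutes S"
    and normalized: "\<forall>x\<in>Zp2 p. cocycle_twist (\<triangleright>) \<rho> \<theta> x (0, 0) = id"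
    using cocycle_normalize[OF quandle \<theta> in_Zp2(7)] by blast
  interpret twisted: aff_Zp2_cocycle p M S "cocycle_twist (\<triangleright>) \<rho> \<theta>"
    using quandle_cocycle_twist[OF quandle \<theta> \<rho>] normalized
    by unfold_locales (simp_all add: quandle)
  show "cohomologous_trivial (Zp2 p) (\<triangleright>) S \<theta>"
    using cohomologous_trivial_if_twist_trivial[OF quandle \<rho>] twisted.cocycle_trivial[OF det_ne_one]
    by blast
qed

end

section \<open>The determinant cocycle\<close>

locale cyclic_shift =
  fixes n :: nat and idx :: "nat \<Rightarrow> 'a"
  assumes n_pos: "0 < n" and inj_idx: "inj idx"
begin

definition rot :: "int \<Rightarrow> 'a \<Rightarrow> 'a" where
  "rot t s = (if s \<in> idx ` {..<n} then idx (nat ((int (inv idx s) + t) mod int n)) else s)"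

lemma nat_mod_less: "nat (t mod int n) < n"
  using n_pos by (simp add: nat_less_iff)

lemma rot_idx: "k < n \<Longrightarrow> rot t (idx k) = idx (nat ((int k + t) mod int n))"
  by (simp add: rot_def inv_f_f[OF inj_idx])

lemma rot_comp: "rot t \<circ> rot u = rot (u + t)"
proof
  fix s
  show "(rot t \<circ> rot u) s = rot (u + t) s"
  proof (cases "s \<in> idx ` {..<n}")
    case True
    then obtain k where "k < n" "s = idx k" by blast
    then show ?thesis
      using n_pos by (simp add: rot_idx nat_mod_less mod_simps add.assoc)
  qed (simp add: rot_def)
qed

lemma rot_zero: "rot 0 = id"
proof
  fix s
  show "rot 0 s = id s"
  proof (cases "s \<in> idx ` {..<n}")
    case True
    then obtain k where "k < n" "s = idx k" by blast
    then show ?thesis by (simp add: rot_idx)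
  qed (simp add: rot_def)
qed

lemma rot_mod: "rot (t mod int n) = rot t"
  by (simp add: rot_def fun_eq_iff mod_simps)

lemma rot_permutes: "rot t permutes idx ` {..<n}"
  unfolding permutes_def
proof (intro conjI allI impI)
  show "rot t s = s" if "s \<notin> idx ` {..<n}" for s
    using that by (simp add: rot_def)
  show "\<exists>!s. rot t s = s'" for s'
  proof
    show "rot t (rot (- t) s') = s'"
      using rot_comp[of t "- t"] by (simp add: rot_zero fun_eq_iff)
    show "s = rot (- t) s'" if "rot t s = s'" for s
      using that rot_comp[of "- t" t] by (auto simp: rot_zero fun_eq_iff)
  qed
qed

lemma rot_eq_imp_mod_eq:
  assumes "rot t = rot u"
  shows "t mod int n = u mod int n"
proof -
  have "idx (nat (t mod int n)) = idx (nat (u mod int n))"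
    using assms n_pos rot_idx[of 0] by (metis add_0 of_nat_0)
  then have "nat (t mod int n) = nat (u mod int n)"
    using inj_idx by (simp add: inj_eq)
  then show ?thesis
    using n_pos by (metis eq_nat_nat_iff pos_mod_sign of_nat_0_less_iff)
qed

end

definition det_form :: "int \<times> int \<Rightarrow> int \<times> int \<Rightarrow> int" where
  "det_form u v = fst u * snd v - snd u * fst v"

context aff_Zp2
begin

text \<open>The two sides differ by \<open>(det M - 1) (det(y, z) - det(x, z - y))\<close>.\<close>
lemma det_form_cocycle:
  assumes "p dvd mat_det M - 1"
  shows "(det_form x z + det_form (x \<triangleright> y) (x \<triangleright> z)) mod p = (det_form y z + det_form x (y \<triangleright> z)) mod p"
proof -
  obtain a b c d where M: "M = (a, b, c, d)" by (cases M) auto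
  obtain x1 x2 y1 y2 z1 z2 where xyz: "x = (x1, x2)" "y = (y1, y2)" "z = (z1, z2)"
    by (cases x, cases y, cases z) auto
  show ?thesis
    unfolding xyz det_form_def aff_op_def mat_apply_def Let_def M
    apply (simp only: prod.case fst_conv snd_conv)
    apply (rule mod_eq_by_cong_dvd[where D = "mat_det M - 1"
          and K = "(y1 * z2 - y2 * z1) - (x1 * (z2 - y2) - x2 * (z1 - y1))"])
       apply ((rule cong_strip)+)[2]
     apply (simp add: M mat_det_def algebra_simps)
    apply (rule assms)
    done
qed

lemma det_form_paths_differ:
  assumes "p dvd mat_det M - 1"
  shows "det_form (F (1, 0)) (G (0, 1)) mod p \<noteq> det_form (F (0, 1)) (G (1, 0)) mod p"
proof
  obtain a b c d where M: "M = (a, b, c, d)" by (cases M) auto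
  assume "det_form (F (1, 0)) (G (0, 1)) mod p = det_form (F (0, 1)) (G (1, 0)) mod p"
  moreover have "det_form (F (1, 0)) (G (0, 1)) mod p = (a * (1 - d) + c * b) mod p"
    unfolding det_form_def mat_apply_def one_minus_mat_def M
    by (simp only: prod.case fst_conv snd_conv) (rule mod_eq_by_cong, (rule cong_strip)+, simp)
  moreover have "det_form (F (0, 1)) (G (1, 0)) mod p = (- b * c - d * (1 - a)) mod p"
    unfolding det_form_def mat_apply_def one_minus_mat_def M
    by (simp only: prod.case fst_conv snd_conv) (rule mod_eq_by_cong, (rule cong_strip)+, simp)
  ultimately have "p dvd (a * (1 - d) + c * b) - (- b * c - d * (1 - a))"
    by (simp add: mod_eq_dvd_iff)
  then have "p dvd - ((a * (1 - d) + c * b) - (- b * c - d * (1 - a)))"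
    by (simp only: dvd_minus_iff)
  then have "p dvd - ((a * (1 - d) + c * b) - (- b * c - d * (1 - a))) - (mat_det M - 1)"
    using assms by (rule dvd_diff)
  also have "- ((a * (1 - d) + c * b) - (- b * c - d * (1 - a))) - (mat_det M - 1)
      = mat_det (one_minus_mat M)"
    by (simp add: M mat_det_def one_minus_mat_def algebra_simps)
  finally show False
    using det_one_minus_coprime by contradiction
qed

lemma op_F_G_swap: "u \<in> Zp2 p \<Longrightarrow> v \<in> Zp2 p \<Longrightarrow> F u \<triangleright> (v \<triangleright> (0, 0)) = F v \<triangleright> (u \<triangleright> (0, 0))"
  by (simp only: op_zero_right) (simp add: op_eq_add mat_apply_one_minus_commute zp2_add_commute)

text \<open>The cocycle \<open>\<theta>\<^bsub>x,y\<^esub> = \<tau>\<^bsup>det(x,y)\<^esup>\<close>, with \<open>\<tau>\<close> a \<open>p\<close>-cycle, transports differently along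
  two paths of length two from \<open>0\<close> to the same point, so it is no coboundary.\<close>
theorem not_simply_connected_if_det_one:
  assumes det_one: "p dvd mat_det M - 1" and infinite: "infinite (UNIV :: 's set)"
  shows "\<not> simply_connected (Zp2 p) (\<triangleright>) TYPE('s)"
proof
  assume simply_connected: "simply_connected (Zp2 p) (\<triangleright>) TYPE('s)"
  obtain idx :: "nat \<Rightarrow> 's" where "inj idx"
    using infinite_countable_subset[OF infinite] by blast
  interpret cyclic_shift "nat p" idx
    using \<open>inj idx\<close> p_pos by unfold_locales simp_all
  define \<theta> where "\<theta> x y = rot (det_form x y)" for x y
  have rot_sum: "\<theta> u v \<circ> \<theta> u' v' = rot ((det_form u' v' + det_form u v) mod p)" for u v u' v'
    using p_pos rot_mod[of "det_form u' v' + det_form u v"] by (simp add: \<theta>_def rot_comp)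
  have "quandle_cocycle (Zp2 p) (\<triangleright>) (idx ` {..<nat p}) \<theta>"
    unfolding quandle_cocycle_def
  proof (intro conjI ballI)
    show "\<theta> x y permutes idx ` {..<nat p}" for x y
      by (simp add: \<theta>_def rot_permutes)
    show "\<theta> (x \<triangleright> y) (x \<triangleright> z) \<circ> \<theta> x z = \<theta> x (y \<triangleright> z) \<circ> \<theta> y z" for x y z
      using det_form_cocycle[OF det_one] by (simp add: rot_sum)
    show "\<theta> x x = id" for x
      by (simp add: \<theta>_def det_form_def mult.commute rot_zero)
  qed
  then have "cohomologous_trivial (Zp2 p) (\<triangleright>) (idx ` {..<nat p}) \<theta>"
    using simply_connected by (simp add: simply_connected_def)
  then have "\<theta> (F (1, 0)) ((0, 1) \<triangleright> (0, 0)) \<circ> \<theta> (0, 1) (0, 0)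
      = \<theta> (F (0, 1)) ((1, 0) \<triangleright> (0, 0)) \<circ> \<theta> (1, 0) (0, 0)"
    by (rule coboundary_path_independent[OF quandle]) (simp_all add: op_F_G_swap)
  then have "rot (det_form (F (1, 0)) (G (0, 1))) = rot (det_form (F (0, 1)) (G (1, 0)))"
    by (simp add: \<theta>_def rot_comp op_zero_right det_form_def)
  then have "det_form (F (1, 0)) (G (0, 1)) mod int (nat p) = det_form (F (0, 1)) (G (1, 0)) mod int (nat p)"
    by (rule rot_eq_imp_mod_eq)
  then show False
    using det_form_paths_differ[OF det_one] p_pos by simp
qed

theorem simply_connected_iff_det_ne_one:
  assumes "infinite (UNIV :: 's set)"
  shows "simply_connected (Zp2 p) (\<triangleright>) TYPE('s) \<longleftrightarrow> \<not> p dvd mat_det M - 1"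
proof (cases "p dvd mat_det M - 1")
  case True
  then show ?thesis using not_simply_connected_if_det_one[OF _ assms] by simp
next
  case False
  then show ?thesis using simply_connected_if_det_ne_one by simp
qed

end

section \<open>The three families\<close>

lemma mod_eq_one_iff_dvd: "1 < p \<Longrightarrow> x mod p = 1 \<longleftrightarrow> p dvd x - (1::int)"
  using mod_eq_dvd_iff[of x p 1] by simp

lemma not_dvd_if_between: "0 < x \<Longrightarrow> x < p \<Longrightarrow> \<not> p dvd (x::int)"
  by (auto dest: zdvd_imp_le)

lemma irreducible_quadratic_mod_no_root:
  assumes "1 < p" and irreducible: "irreducible_quadratic_mod p b1 b0"
  shows "\<not> p dvd r * r + b1 * r + b0"
proof
  assume root: "p dvd r * r + b1 * r + b0"
  have "(- r) * (b1 + r) - b0 = - (r * r + b1 * r + b0)"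
    by (simp add: algebra_simps)
  then have "p dvd (- r) * (b1 + r) - b0"
    using root by (simp only: dvd_minus_iff)
  then have "((- r) * (b1 + r)) mod p = b0 mod p"
    by (simp only: mod_eq_dvd_iff)
  with \<open>1 < p\<close> have "\<exists>a1 a0 c1 c0. a1 mod p \<noteq> 0 \<and> c1 mod p \<noteq> 0 \<and> (a1 * c1) mod p = 1 mod p \<and>
      (a1 * c0 + a0 * c1) mod p = b1 mod p \<and> (a0 * c0) mod p = b0 mod p"
    by (intro exI[of _ 1] exI[of _ "- r"] exI[of _ 1] exI[of _ "b1 + r"]) simp
  with irreducible show False
    unfolding irreducible_quadratic_mod_def by blast
qed

lemma aff_Zp2_Dmat:
  assumes "prime p" "1 < b" "b < p" "1 < c" "c < p"
  shows "aff_Zp2 p (Dmat b c)"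
proof
  have "\<not> p dvd b" "\<not> p dvd c" "\<not> p dvd b - 1" "\<not> p dvd c - 1"
    using assms by (simp_all add: not_dvd_if_between)
  then show "\<not> p dvd mat_det (Dmat b c)" "\<not> p dvd mat_det (one_minus_mat (Dmat b c))"
    using \<open>prime p\<close>
    by (simp_all add: Dmat_def mat_det_def one_minus_mat_def prime_dvd_mult_iff
        mult.commute[of "1 - b"] dvd_diff_commute[of p 1])
qed (rule assms(1))

lemma aff_Zp2_Gmat:
  assumes "prime p" "1 < b" "b < p"
  shows "aff_Zp2 p (Gmat b)"
proof
  have "\<not> p dvd b" "\<not> p dvd b - 1"
    using assms by (simp_all add: not_dvd_if_between)
  then show "\<not> p dvd mat_det (Gmat b)" "\<not> p dvd mat_det (one_minus_mat (Gmat b))"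
    using \<open>prime p\<close> by (simp_all add: Gmat_def mat_det_def one_minus_mat_def prime_dvd_mult_iff
        dvd_diff_commute[of p 1])
qed (rule assms(1))

lemma aff_Zp2_Hmat:
  assumes "prime p" and irreducible: "irreducible_quadratic_mod p b1 b0"
  shows "aff_Zp2 p (Hmat b1 b0)"
proof
  have "1 < p" using \<open>prime p\<close> prime_gt_1_int by blast
  have "mat_det (Hmat b1 b0) = 0 * 0 + b1 * 0 + b0"
    and "mat_det (one_minus_mat (Hmat b1 b0)) = 1 * 1 + b1 * 1 + b0"
    by (simp_all add: Hmat_def mat_det_def one_minus_mat_def)
  then show "\<not> p dvd mat_det (Hmat b1 b0)" "\<not> p dvd mat_det (one_minus_mat (Hmat b1 b0))"
    using irreducible_quadratic_mod_no_root[OF \<open>1 < p\<close> irreducible] by metis+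
qed (rule assms(1))

lemma simply_connected_Dmat_iff:
  assumes "prime p" "infinite (UNIV :: 's set)" "1 < b" "b < p" "1 < c" "c < p"
  shows "simply_connected (Zp2 p) (aff_op p (Dmat b c)) TYPE('s) \<longleftrightarrow> (b * c) mod p \<noteq> 1"
proof -
  interpret aff_Zp2 p "Dmat b c"
    using aff_Zp2_Dmat[OF assms(1,3-)] .
  show ?thesis
    using simply_connected_iff_det_ne_one[OF assms(2)] prime_gt_1_int[OF assms(1)]
    by (simp add: Dmat_def mat_det_def mod_eq_one_iff_dvd)
qed

lemma simply_connected_Gmat_iff:
  assumes "prime p" "infinite (UNIV :: 's set)" "1 < b" "b < p"
  shows "simply_connected (Zp2 p) (aff_op p (Gmat b)) TYPE('s) \<longleftrightarrow> b mod p \<noteq> (-1) mod p"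
proof -
  interpret aff_Zp2 p "Gmat b"
    using aff_Zp2_Gmat[OF assms(1,3-)] .
  have "\<not> p dvd b - 1"
    using assms by (simp add: not_dvd_if_between)
  then have "p dvd mat_det (Gmat b) - 1 \<longleftrightarrow> p dvd b + 1"
    using assms(1) by (simp add: Gmat_def mat_det_def square_diff_one_factored prime_dvd_mult_iff)
  also have "\<dots> \<longleftrightarrow> b mod p = (-1) mod p"
    by (simp add: mod_eq_dvd_iff)
  finally show ?thesis
    using simply_connected_iff_det_ne_one[OF assms(2)] by simp
qed

lemma simply_connected_Hmat_iff:
  assumes "prime p" "infinite (UNIV :: 's set)" "b0 \<in> {0..<p}" "irreducible_quadratic_mod p b1 b0"
  shows "simply_connected (Zp2 p) (aff_op p (Hmat b1 b0)) TYPE('s) \<longleftrightarrow> b0 \<noteq> 1"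
proof -
  interpret aff_Zp2 p "Hmat b1 b0"
    using aff_Zp2_Hmat[OF assms(1,4)] .
  have "p dvd mat_det (Hmat b1 b0) - 1 \<longleftrightarrow> b0 = 1"
    using assms(3) prime_gt_1_int[OF assms(1)] mod_eq_one_iff_dvd[of p b0]
    by (simp add: Hmat_def mat_det_def)
  then show ?thesis
    using simply_connected_iff_det_ne_one[OF assms(2)] by simp
qed

theorem theorem3p16:
  fixes p :: int
  assumes "prime p" and "infinite (UNIV :: 's set)"
  shows "(\<forall>b c. 1 < b \<and> b \<le> c \<and> c < p \<longrightarrow>
            (simply_connected (Zp2 p) (aff_op p (Dmat b c)) TYPE('s)
               \<longleftrightarrow> (b * c) mod p \<noteq> 1))
       \<and> (\<forall>b. 1 < b \<and> b < p \<longrightarrow>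
            (simply_connected (Zp2 p) (aff_op p (Gmat b)) TYPE('s)
               \<longleftrightarrow> b mod p \<noteq> (-1) mod p))
       \<and> (\<forall>b1 b0. b1 \<in> {0..<p} \<and> b0 \<in> {0..<p} \<and> irreducible_quadratic_mod p b1 b0 \<longrightarrow>
            (simply_connected (Zp2 p) (aff_op p (Hmat b1 b0)) TYPE('s)
               \<longleftrightarrow> b0 \<noteq> 1))"
  using simply_connected_Dmat_iff[OF assms] simply_connected_Gmat_iff[OF assms]
    simply_connected_Hmat_iff[OF assms]
  by auto

end
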